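(* Let $H$ be a finite group of odd order with $d(H)=2$. Then $\mathsf{GEN}(\mathbb{Z}_2^2\times H)=*1$.
   Context: For a finite group $G$, $\mathsf{GEN}(G)$ is the following impartial two-player game. A position is a set of elements selected so far; the starting position is $\emptyset$. From a position $P$ with $\langle P\rangle\neq G$, the player to move selects some $g\in G\setminus P$, producing the position $P\cup\{g\}$ (these are the options of $P$); a position $P$ with $\langle P\rangle = G$ has no options. The nim-number of a position is defined recursively by $\operatorname{nim}(P)=\operatorname{mex}\{\operatorname{nim}(Q): Q \text{ an option of } P\}$, where $\operatorname{mex}(A)$ is the least nonnegative integer not in $A$. We write $\mathsf{GEN}(G)=*n$ if $\operatorname{nim}(\emptyset)=n$. $d(G)$ denotes the minimum size of a generating set of $G$; $\mathbb{Z}_2^2=\mathbb{Z}_2\times\mathbb{Z}_2$. *)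

theory Defs
  imports "HOL-Algebra.Algebra"
begin

definition mex :: "nat set \<Rightarrow> nat" where
  "mex A = (LEAST n. n \<notin> A)"

text \<open>Nim-number of position P in GEN(G), by recursion with fuel k; positions are
  subsets of the carrier, and from P each move adds an element of carrier G - P,
  so the recursion depth is bounded by card (carrier G - P).\<close>
fun gen_nim_aux :: "('a, 'b) monoid_scheme \<Rightarrow> nat \<Rightarrow> 'a set \<Rightarrow> nat" where
  "gen_nim_aux G 0 P = 0"
| "gen_nim_aux G (Suc k) P =
     (if generate G P = carrier G then 0
      else mex ((\<lambda>g. gen_nim_aux G k (insert g P)) ` (carrier G - P)))"

definition gen_nim :: "('a, 'b) monoid_scheme \<Rightarrow> 'a set \<Rightarrow> nat" where
  "gen_nim G P = gen_nim_aux G (card (carrier G - P)) P"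

text \<open>GEN(G) = *n  iff  nim(empty) = n.\<close>
definition GEN_value :: "('a, 'b) monoid_scheme \<Rightarrow> nat" where
  "GEN_value G = gen_nim G {}"

definition min_gens :: "('a, 'b) monoid_scheme \<Rightarrow> nat" where
  "min_gens G = (LEAST n. \<exists>S. S \<subseteq> carrier G \<and> finite S \<and> card S = n \<and> generate G S = carrier G)"

end

theory Submission
  imports Defs
begin

(*
  As |Z_2^2| = 4 and |H| are coprime, a set generates Z_2^2 \<times> H exactly when its two
  projections generate Z_2^2 and H. Call a set of elements of H nearly generating if adding one
  element makes it generate H, and identify H with {1} \<times> H. By induction on the number of
  unused elements, a position P that leaves H has nim-value 0 if it generates, 2 if it does not
  and |P| is odd, and otherwise 1 or 0 according to whether its H-projection is nearly generating.
  A nearly generating position inside H has value 0 if odd and 1 if even. The required moves exist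
  by parity: a position of the wrong parity cannot exhaust Z_2^2 \<times> K for a subgroup K of H
  (order divisible by 4), {1, z} \<times> H (even order) or {1} \<times> H (odd order). From the
  empty position, taking (1, x) for a generator x of a generating pair {x, y} reaches value 0,
  moves outside H reach value 2, and no move (1, h) reaches value 1, as (w, x) with w \<noteq> 1
  then answers with value 1. Hence GEN(Z_2^2 \<times> H) = *1.
*)

lemma mex_eqI:
  assumes "\<And>m. m < n \<Longrightarrow> m \<in> A" and "n \<notin> A"
  shows "mex A = n"
  unfolding mex_def using assms by (intro Least_equality) (auto simp: not_less[symmetric])

lemma mex_notin:
  assumes "finite A"
  shows "mex A \<notin> A"
proof -
  have "\<exists>m. m \<notin> A"
    using assms by (meson ex_new_if_finite infinite_UNIV_nat)
  then show ?thesis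
    unfolding mex_def by (rule LeastI_ex)
qed

definition generates :: "('a, 'b) monoid_scheme \<Rightarrow> 'a set \<Rightarrow> bool" where
  "generates G S \<longleftrightarrow> generate G S = carrier G"

definition nearly_generates :: "('a, 'b) monoid_scheme \<Rightarrow> 'a set \<Rightarrow> bool" where
  "nearly_generates G S \<longleftrightarrow> (\<exists>h \<in> carrier G. generates G (insert h S))"

lemma (in group) generates_carrier: "generates G (carrier G)"
  unfolding generates_def
  using generate_incl[of "carrier G"] generate.incl[of _ "carrier G" G] by (intro subset_antisym) auto

lemma (in group) generates_mono:
  assumes "generates G S" and "S \<subseteq> T" and "T \<subseteq> carrier G"
  shows "generates G T"
  using assms mono_generate[of S T] generate_incl[of T] unfolding generates_def by blast

lemma (in group) nearly_generates_mono:
  assumes "nearly_generates G S" and "S \<subseteq> T" and "T \<subseteq> carrier G"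
  shows "nearly_generates G T"
  using assms generates_mono[of "insert _ S" "insert _ T"] unfolding nearly_generates_def by blast

lemma (in group) nearly_generates_if_generates:
  assumes "generates G S" and "S \<subseteq> carrier G"
  shows "nearly_generates G S"
  using assms generates_mono[of S "insert \<one> S"] unfolding nearly_generates_def by blast

lemma (in group) generate_insert_absorb:
  assumes "h \<in> generate G S" and "S \<subseteq> carrier G"
  shows "generate G (insert h S) = generate G S"
proof
  show "generate G (insert h S) \<subseteq> generate G S"
    using assms generate.incl[of _ S G] by (intro generate_subgroup_incl generate_is_subgroup) auto
qed (rule mono_generate, blast)

lemma (in group) nearly_generates_insert_absorb:
  assumes "h \<in> generate G S" and "S \<subseteq> carrier G"
  shows "nearly_generates G (insert h S) \<longleftrightarrow> nearly_generates G S"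
proof -
  have "generate G (insert k (insert h S)) = generate G (insert k S)" if "k \<in> carrier G" for k
    using assms that mono_generate[of S "insert k S"]
    by (subst insert_commute, intro generate_insert_absorb) auto
  then show ?thesis
    unfolding nearly_generates_def generates_def by auto
qed

lemma (in group) exists_generating_set_of_card_min_gens:
  assumes "finite (carrier G)"
  obtains S where "S \<subseteq> carrier G" and "card S = min_gens G" and "generates G S"
proof -
  let ?Q = "\<lambda>n. \<exists>S. S \<subseteq> carrier G \<and> finite S \<and> card S = n \<and> generate G S = carrier G"
  have "?Q (card (carrier G))"
    using assms generates_carrier unfolding generates_def by blast
  then have "?Q (LEAST n. ?Q n)"
    by (rule LeastI)
  then show thesis
    using that unfolding min_gens_def generates_def by blast
qed

(* The fuel card (carrier G - P) of gen_nim always suffices, so gen_nim obeys the game recursion. *)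
lemma gen_nim_eq:
  assumes "group G" and "finite (carrier G)" and "P \<subseteq> carrier G"
  shows "gen_nim G P = (if generates G P then 0
           else mex ((\<lambda>g. gen_nim G (insert g P)) ` (carrier G - P)))"
proof (cases "P = carrier G")
  case True
  then have "generates G P" and "gen_nim G P = 0"
    using group.generates_carrier[OF assms(1)] by (simp_all add: gen_nim_def)
  then show ?thesis
    by simp
next
  case False
  then have "card (carrier G - P) > 0"
    using assms(2,3) by (auto simp: card_gt_0_iff)
  then obtain k where k: "card (carrier G - P) = Suc k"
    using gr0_implies_Suc by blast
  have "gen_nim_aux G k (insert g P) = gen_nim G (insert g P)" if "g \<in> carrier G - P" for g
  proof -
    have "carrier G - insert g P = (carrier G - P) - {g}"
      by blast
    then have "card (carrier G - insert g P) = k"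
      using that k assms(2) by simp
    then show ?thesis
      by (simp add: gen_nim_def)
  qed
  then have options: "(\<lambda>g. gen_nim_aux G k (insert g P)) ` (carrier G - P)
      = (\<lambda>g. gen_nim G (insert g P)) ` (carrier G - P)"
    by (rule image_cong[OF refl])
  have "gen_nim G P = gen_nim_aux G (Suc k) P"
    unfolding gen_nim_def k ..
  then show ?thesis
    by (simp only: gen_nim_aux.simps options generates_def)
qed

lemma gen_nim_terminal:
  assumes "group G" and "finite (carrier G)" and "P \<subseteq> carrier G" and "generates G P"
  shows "gen_nim G P = 0"
  using gen_nim_eq[OF assms(1-3)] assms(4) by simp

lemma gen_nim_eqI:
  assumes "group G" and "finite (carrier G)" and "P \<subseteq> carrier G" and "\<not> generates G P"
    and "\<And>m. m < n \<Longrightarrow> \<exists>g \<in> carrier G - P. gen_nim G (insert g P) = m"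
    and "\<And>g. g \<in> carrier G - P \<Longrightarrow> gen_nim G (insert g P) \<noteq> n"
  shows "gen_nim G P = n"
  using gen_nim_eq[OF assms(1-3)] assms(4-6) by (force intro: mex_eqI)

lemma gen_nim_neqI:
  assumes "group G" and "finite (carrier G)" and "P \<subseteq> carrier G" and "\<not> generates G P"
    and "g \<in> carrier G - P" and "gen_nim G (insert g P) = n"
  shows "gen_nim G P \<noteq> n"
  using gen_nim_eq[OF assms(1-3)] assms(2,4-6)
    mex_notin[of "(\<lambda>g. gen_nim G (insert g P)) ` (carrier G - P)"]
  by force

lemma card_Diff_insert_less:
  assumes "finite A" and "a \<in> A - B"
  shows "card (A - insert a B) < card (A - B)"
proof -
  have "A - insert a B = (A - B) - {a}"
    by blast
  then show ?thesis
    using assms card_Diff1_less[of "A - B" a] by simp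
qed

lemma DirProd_pow: "(a, b) [^]\<^bsub>G \<times>\<times> K\<^esub> (n::nat) = (a [^]\<^bsub>G\<^esub> n, b [^]\<^bsub>K\<^esub> n)"
  by (induction n) auto

lemma DirProd_pow_coprime_order:
  assumes "group A" and "group B" and "finite (carrier B)" and "coprime (order A) (order B)"
    and "a \<in> carrier A" and "b \<in> carrier B"
  obtains n where "(a, b) [^]\<^bsub>A \<times>\<times> B\<^esub> (n::nat) = (a, \<one>\<^bsub>B\<^esub>)"
proof -
  have "order B \<noteq> 0"
    using assms(2,3) group.is_monoid monoid.order_gt_0_iff_finite by blast
  \<comment> \<open>Bezout: a multiple of order B that is 1 modulo order A\<close>
  then obtain k q where "order B * k = order A * q + 1"
    using bezout_nat[of "order B" "order A"] assms(4) by (auto simp: coprime_iff_gcd_eq_1 gcd.commute)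
  moreover have "a [^]\<^bsub>A\<^esub> (order A * q + 1) = a"
    using assms(1,5) by (simp add: group.pow_order_eq_1 monoid.nat_pow_pow[symmetric] group.is_monoid
        monoid.nat_pow_mult[symmetric] monoid.nat_pow_one)
  moreover have "b [^]\<^bsub>B\<^esub> (order B * k) = \<one>\<^bsub>B\<^esub>"
    using assms(2,6) by (simp add: group.pow_order_eq_1 monoid.nat_pow_pow[symmetric] group.is_monoid
        monoid.nat_pow_one)
  ultimately show thesis
    using that[of "order B * k"] by (simp add: DirProd_pow)
qed

lemma generates_components_if_generates_DirProd:
  assumes A: "group A" and B: "group B" and P: "P \<subseteq> carrier (A \<times>\<times> B)"
    and "generates (A \<times>\<times> B) P"
  shows "generates A (fst ` P)" and "generates B (snd ` P)"
proof -
  interpret A: group A by (rule A)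
  interpret B: group B by (rule B)
  have fst: "group_hom (A \<times>\<times> B) A fst" and snd: "group_hom (A \<times>\<times> B) B snd"
    using A B by (auto simp: group_hom_def group_hom_axioms_def hom_def DirProd_group mult_DirProd')
  show "generates A (fst ` P)" and "generates B (snd ` P)"
    using group_hom.generate_img[OF fst P] group_hom.generate_img[OF snd P] assms(4)
    by (auto simp: generates_def)
qed

lemma DirProd_components_in_generate:
  assumes A: "group A" and B: "group B" and "finite (carrier B)"
    and coprime: "coprime (order A) (order B)" and P: "P \<subseteq> carrier (A \<times>\<times> B)"
    and ab: "(a, b) \<in> P"
  shows "(a, \<one>\<^bsub>B\<^esub>) \<in> generate (A \<times>\<times> B) P" and "(\<one>\<^bsub>A\<^esub>, b) \<in> generate (A \<times>\<times> B) P"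
proof -
  interpret B: group B by (rule B)
  interpret AB: group "A \<times>\<times> B"
    using A B by (rule DirProd_group)
  let ?L = "generate (A \<times>\<times> B) P"
  have L: "subgroup ?L (A \<times>\<times> B)"
    using P by (rule AB.generate_is_subgroup)
  have a: "a \<in> carrier A" and b: "b \<in> carrier B" and ab_L: "(a, b) \<in> ?L"
    using ab P generate.incl[of _ P] by auto
  obtain n :: nat where "(a, b) [^]\<^bsub>A \<times>\<times> B\<^esub> n = (a, \<one>\<^bsub>B\<^esub>)"
    using DirProd_pow_coprime_order[OF A B assms(3) coprime a b] .
  then show a1: "(a, \<one>\<^bsub>B\<^esub>) \<in> ?L"
    using AB.subgroup_int_pow_closed[OF L ab_L, of "int n"] by (simp add: int_pow_int)
  have "inv\<^bsub>A \<times>\<times> B\<^esub> (a, \<one>\<^bsub>B\<^esub>) = (inv\<^bsub>A\<^esub> a, \<one>\<^bsub>B\<^esub>)"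
    using inv_DirProd[OF A B a B.one_closed] by simp
  then have "inv\<^bsub>A \<times>\<times> B\<^esub> (a, \<one>\<^bsub>B\<^esub>) \<otimes>\<^bsub>A \<times>\<times> B\<^esub> (a, b) = (\<one>\<^bsub>A\<^esub>, b)"
    using a b A by (simp add: group.l_inv)
  then show "(\<one>\<^bsub>A\<^esub>, b) \<in> ?L"
    using subgroup.m_closed[OF L subgroup.m_inv_closed[OF L a1] ab_L] by simp
qed

lemma generates_DirProd_if_generates_components:
  assumes A: "group A" and B: "group B" and "finite (carrier B)"
    and coprime: "coprime (order A) (order B)" and P: "P \<subseteq> carrier (A \<times>\<times> B)"
    and "generates A (fst ` P)" and "generates B (snd ` P)"
  shows "generates (A \<times>\<times> B) P"
proof -
  interpret A: group A by (rule A)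
  interpret B: group B by (rule B)
  interpret AB: group "A \<times>\<times> B"
    using A B by (rule DirProd_group)
  let ?L = "generate (A \<times>\<times> B) P"
  have L: "subgroup ?L (A \<times>\<times> B)"
    using P by (rule AB.generate_is_subgroup)
  have "group_hom A (A \<times>\<times> B) (\<lambda>a. (a, \<one>\<^bsub>B\<^esub>))"
    and "group_hom B (A \<times>\<times> B) (\<lambda>b. (\<one>\<^bsub>A\<^esub>, b))"
    using A B by (auto simp: group_hom_def group_hom_axioms_def hom_def DirProd_group)
  moreover have "fst ` P \<subseteq> carrier A" and "snd ` P \<subseteq> carrier B"
    using P by auto
  ultimately have "generate (A \<times>\<times> B) ((\<lambda>a. (a, \<one>\<^bsub>B\<^esub>)) ` fst ` P) = (\<lambda>a. (a, \<one>\<^bsub>B\<^esub>)) ` carrier A"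
    and "generate (A \<times>\<times> B) ((\<lambda>b. (\<one>\<^bsub>A\<^esub>, b)) ` snd ` P) = (\<lambda>b. (\<one>\<^bsub>A\<^esub>, b)) ` carrier B"
    using group_hom.generate_img assms(6,7) unfolding generates_def by metis+
  moreover have "(\<lambda>a. (a, \<one>\<^bsub>B\<^esub>)) ` fst ` P \<subseteq> ?L" and "(\<lambda>b. (\<one>\<^bsub>A\<^esub>, b)) ` snd ` P \<subseteq> ?L"
    using DirProd_components_in_generate[OF A B assms(3) coprime P] by force+
  ultimately have inl_L: "(\<lambda>a. (a, \<one>\<^bsub>B\<^esub>)) ` carrier A \<subseteq> ?L"
    and inr_L: "(\<lambda>b. (\<one>\<^bsub>A\<^esub>, b)) ` carrier B \<subseteq> ?L"
    using AB.generate_subgroup_incl[OF _ L] by metis+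
  have "carrier (A \<times>\<times> B) \<subseteq> ?L"
  proof
    fix p assume "p \<in> carrier (A \<times>\<times> B)"
    then obtain a b where p: "p = (a, b)" "a \<in> carrier A" "b \<in> carrier B"
      by auto
    have "(a, \<one>\<^bsub>B\<^esub>) \<otimes>\<^bsub>A \<times>\<times> B\<^esub> (\<one>\<^bsub>A\<^esub>, b) \<in> ?L"
      using subgroup.m_closed[OF L] inl_L inr_L p(2,3) by blast
    then show "p \<in> ?L"
      using p by simp
  qed
  then show ?thesis
    unfolding generates_def using AB.generate_incl[OF P] by (intro subset_antisym)
qed

lemma generates_DirProd_iff:
  assumes "group A" and "group B" and "finite (carrier B)"
    and "coprime (order A) (order B)" and "P \<subseteq> carrier (A \<times>\<times> B)"
  shows "generates (A \<times>\<times> B) P \<longleftrightarrow> generates A (fst ` P) \<and> generates B (snd ` P)"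
  using generates_components_if_generates_DirProd[OF assms(1,2,5)]
    generates_DirProd_if_generates_components[OF assms] by blast

abbreviation klein4 :: "(int \<times> int) monoid" where
  "klein4 \<equiv> integer_mod_group 2 \<times>\<times> integer_mod_group 2"

lemma carrier_integer_mod_group_2: "carrier (integer_mod_group 2) = {0, 1}"
  by (auto simp: carrier_integer_mod_group)

lemma group_klein4: "group klein4"
  by (simp add: DirProd_group)

lemma order_klein4: "order klein4 = 4"
  by (simp add: order_def carrier_integer_mod_group_2)

lemma one_klein4_closed: "\<one>\<^bsub>klein4\<^esub> \<in> carrier klein4"
  by (simp add: carrier_integer_mod_group_2)

lemma klein4_pair_subgroup:
  assumes "z \<in> carrier klein4"
  shows "subgroup {\<one>\<^bsub>klein4\<^esub>, z} klein4"
proof (rule group.subgroupI[OF group_klein4])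
  show "{\<one>\<^bsub>klein4\<^esub>, z} \<subseteq> carrier klein4"
    using assms one_klein4_closed by blast
  show "inv\<^bsub>klein4\<^esub> a \<in> {\<one>\<^bsub>klein4\<^esub>, z}" if "a \<in> {\<one>\<^bsub>klein4\<^esub>, z}" for a
    using that assms by (auto simp: carrier_integer_mod_group_2)
  show "a \<otimes>\<^bsub>klein4\<^esub> b \<in> {\<one>\<^bsub>klein4\<^esub>, z}" if "a \<in> {\<one>\<^bsub>klein4\<^esub>, z}" "b \<in> {\<one>\<^bsub>klein4\<^esub>, z}" for a b
    using that assms by (auto simp: carrier_integer_mod_group_2)
qed simp

lemma klein4_exists_outside_pair:
  obtains w where "w \<in> carrier klein4" and "w \<notin> {\<one>\<^bsub>klein4\<^esub>, z}"
proof -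
  have "card {\<one>\<^bsub>klein4\<^esub>, z} \<le> 2"
    by (simp add: card_insert_if)
  then have "card {\<one>\<^bsub>klein4\<^esub>, z} < card (carrier klein4)"
    using order_klein4 unfolding order_def by linarith
  then show thesis
    using that by (metis card_mono finite.emptyI finite.insertI leD subsetI)
qed

lemma klein4_not_generated_by_pair:
  assumes "z \<in> carrier klein4" and "S \<subseteq> {\<one>\<^bsub>klein4\<^esub>, z}"
  shows "\<not> generates klein4 S"
proof
  assume "generates klein4 S"
  then have "carrier klein4 \<subseteq> {\<one>\<^bsub>klein4\<^esub>, z}"
    using group.generate_subgroup_incl[OF group_klein4 assms(2) klein4_pair_subgroup[OF assms(1)]]
    by (simp add: generates_def)
  then show False
    using klein4_exists_outside_pair by blast
qed

lemma klein4_generates_iff: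
  assumes "S \<subseteq> carrier klein4" and "z \<in> S" and "z \<noteq> \<one>\<^bsub>klein4\<^esub>"
  shows "generates klein4 S \<longleftrightarrow> \<not> S \<subseteq> {\<one>\<^bsub>klein4\<^esub>, z}"
proof
  assume "generates klein4 S"
  then show "\<not> S \<subseteq> {\<one>\<^bsub>klein4\<^esub>, z}"
    using klein4_not_generated_by_pair assms(1,2) by blast
next
  assume "\<not> S \<subseteq> {\<one>\<^bsub>klein4\<^esub>, z}"
  then obtain w where w: "w \<in> S" "w \<notin> {\<one>\<^bsub>klein4\<^esub>, z}"
    by blast
  have "z \<in> carrier klein4" "w \<in> carrier klein4"
    using assms(1,2) w(1) by auto
  then have "carrier klein4 = {\<one>\<^bsub>klein4\<^esub>, z, w, z \<otimes>\<^bsub>klein4\<^esub> w}"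
    using assms(3) w(2) by (auto simp: carrier_integer_mod_group_2)
  moreover have "{\<one>\<^bsub>klein4\<^esub>, z, w, z \<otimes>\<^bsub>klein4\<^esub> w} \<subseteq> generate klein4 S"
    using assms(2) w(1) generate.one[of klein4 S] by (blast intro: generate.incl generate.eng)
  ultimately show "generates klein4 S"
    unfolding generates_def using group.generate_incl[OF group_klein4 assms(1)] by blast
qed

locale klein4_times_odd = H: group H for H :: "('a, 'b) monoid_scheme" +
  fixes x y :: 'a
  assumes finite_H: "finite (carrier H)" and odd_order_H: "odd (order H)"
    and x: "x \<in> carrier H" and y: "y \<in> carrier H" and generates_xy: "generates H {x, y}"
begin

abbreviation G :: "((int \<times> int) \<times> 'a) monoid" where
  "G \<equiv> klein4 \<times>\<times> H"

lemma group_G: "group G"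
  by (simp add: DirProd_group group_klein4 H.is_group)

lemma finite_G: "finite (carrier G)"
  using finite_H by (simp add: carrier_integer_mod_group_2)

lemma generates_G_iff:
  assumes "P \<subseteq> carrier G"
  shows "generates G P \<longleftrightarrow> generates klein4 (fst ` P) \<and> generates H (snd ` P)"
proof (rule generates_DirProd_iff[OF group_klein4 H.is_group finite_H _ assms])
  show "coprime (order klein4) (order H)"
    using odd_order_H order_klein4
    by (metis coprime_left_2_iff_odd coprime_mult_left_iff numeral_Bit0_eq_double)
qed

lemma not_generates_G_if_fst_in_pair:
  assumes "P \<subseteq> carrier G" and "z \<in> carrier klein4" and "fst ` P \<subseteq> {\<one>\<^bsub>klein4\<^esub>, z}"
  shows "\<not> generates G P"
  using generates_G_iff[OF assms(1)] klein4_not_generated_by_pair[OF assms(2,3)] by blast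

lemma generates_H_if_xy:
  assumes "S \<subseteq> carrier H" and "x \<in> S" and "y \<in> S"
  shows "generates H S"
  using H.generates_mono[OF generates_xy _ assms(1)] assms(2,3) by blast

lemma nearly_generates_snd_insert:
  assumes "P \<subseteq> carrier G" and "g \<in> carrier G" and "nearly_generates H (snd ` P)"
  shows "nearly_generates H (snd ` insert g P)"
proof -
  have "snd ` insert g P \<subseteq> carrier H"
    using assms(1,2) by auto
  then show ?thesis
    using H.nearly_generates_mono[OF assms(3), of "snd ` insert g P"] by blast
qed

lemma exists_generating_option_iff:
  assumes P: "P \<subseteq> carrier G" and unfinished: "\<not> generates G P"
    and g0: "g0 \<in> P" "fst g0 \<noteq> \<one>\<^bsub>klein4\<^esub>"
  shows "(\<exists>g \<in> carrier G - P. generates G (insert g P)) \<longleftrightarrow> nearly_generates H (snd ` P)"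
proof
  assume "\<exists>g \<in> carrier G - P. generates G (insert g P)"
  then obtain g where g: "g \<in> carrier G" "generates G (insert g P)"
    by blast
  then have "generates H (insert (snd g) (snd ` P))"
    using generates_G_iff[of "insert g P"] P by auto
  then show "nearly_generates H (snd ` P)"
    using g(1) unfolding nearly_generates_def by auto
next
  assume "nearly_generates H (snd ` P)"
  then obtain h where h: "h \<in> carrier H" "generates H (insert h (snd ` P))"
    unfolding nearly_generates_def by blast
  obtain w where w: "w \<in> carrier klein4" "w \<notin> {\<one>\<^bsub>klein4\<^esub>, fst g0}"
    using klein4_exists_outside_pair .
  have fst_wP: "fst ` insert (w, h) P \<subseteq> carrier klein4"
    using w(1) P by auto
  have "fst g0 \<in> fst ` insert (w, h) P" and "\<not> fst ` insert (w, h) P \<subseteq> {\<one>\<^bsub>klein4\<^esub>, fst g0}"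
    using g0(1) w(2) by auto
  then have "generates klein4 (fst ` insert (w, h) P)"
    using klein4_generates_iff[OF fst_wP _ g0(2)] by blast
  moreover have "generates H (snd ` insert (w, h) P)"
    using h(2) by simp
  moreover have wh: "(w, h) \<in> carrier G"
    using w(1) h(1) by simp
  ultimately have "generates G (insert (w, h) P)"
    using generates_G_iff[of "insert (w, h) P"] P by blast
  moreover from this have "(w, h) \<notin> P"
    using unfinished by (metis insert_absorb)
  ultimately show "\<exists>g \<in> carrier G - P. generates G (insert g P)"
    using wh by blast
qed

lemma exists_option_in_generated_subgroup:
  assumes P: "P \<subseteq> carrier G" and "odd (card P)"
  obtains g where "g \<in> carrier G - P" and "snd g \<in> generate H (snd ` P)"
proof -
  let ?S = "carrier klein4 \<times> generate H (snd ` P)"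
  have K: "generate H (snd ` P) \<subseteq> carrier H"
    using P by (intro H.generate_incl) auto
  have "P \<subseteq> ?S"
    using P generate.incl[of _ "snd ` P" H] by fastforce
  moreover have "card ?S = 4 * card (generate H (snd ` P))"
    using order_klein4 by (simp add: order_def card_cartesian_product)
  then have "P \<noteq> ?S"
    using assms(2) by auto
  ultimately obtain g where "g \<in> ?S" "g \<notin> P"
    by blast
  then show thesis
    using that K by auto
qed

lemma exists_option_with_fst_in_pair:
  assumes P: "P \<subseteq> carrier G" and z: "z \<in> carrier klein4" "z \<noteq> \<one>\<^bsub>klein4\<^esub>"
    and "fst ` P \<subseteq> {\<one>\<^bsub>klein4\<^esub>, z}" and "odd (card P)"
  obtains g where "g \<in> carrier G - P" and "fst g \<in> {\<one>\<^bsub>klein4\<^esub>, z}"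
proof -
  let ?S = "{\<one>\<^bsub>klein4\<^esub>, z} \<times> carrier H"
  have "P \<subseteq> ?S"
    using assms(1,4) by fastforce
  moreover have "card ?S = 2 * order H"
    using z(2) by (simp add: order_def card_cartesian_product)
  then have "P \<noteq> ?S"
    using assms(5) by auto
  ultimately obtain g where g: "g \<in> ?S" "g \<notin> P"
    by blast
  have "?S \<subseteq> carrier G"
    using z(1) one_klein4_closed by fastforce
  then have "g \<in> carrier G - P"
    using g by blast
  moreover have "fst g \<in> {\<one>\<^bsub>klein4\<^esub>, z}"
    using g(1) by (simp only: mem_Times_iff)
  ultimately show thesis
    by (rule that)
qed

lemma nearly_generating_option_if_generates_H:
  assumes P: "P \<subseteq> carrier G" and unfinished: "\<not> generates G P"
    and g0: "g0 \<in> P" "fst g0 \<noteq> \<one>\<^bsub>klein4\<^esub>" and odd: "odd (card P)"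
    and generates_H: "generates H (snd ` P)"
  obtains g where "g \<in> carrier G - P" and "\<not> generates G (insert g P)"
    and "nearly_generates H (snd ` insert g P)"
proof -
  have fst_P: "fst ` P \<subseteq> carrier klein4" and fst_g0: "fst g0 \<in> carrier klein4"
    using P g0(1) by auto
  have "\<not> generates klein4 (fst ` P)"
    using generates_G_iff[OF P] unfinished generates_H by blast
  then have in_pair: "fst ` P \<subseteq> {\<one>\<^bsub>klein4\<^esub>, fst g0}"
    using klein4_generates_iff[OF fst_P _ g0(2)] g0(1) by blast
  then obtain g where g: "g \<in> carrier G - P" "fst g \<in> {\<one>\<^bsub>klein4\<^esub>, fst g0}"
    using exists_option_with_fst_in_pair[OF P fst_g0 g0(2) _ odd] by blast
  have snd_gP: "snd ` insert g P \<subseteq> carrier H"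
    using g(1) P by auto
  have "fst ` insert g P \<subseteq> {\<one>\<^bsub>klein4\<^esub>, fst g0}"
    using g(2) in_pair by blast
  then have "\<not> generates G (insert g P)"
    using not_generates_G_if_fst_in_pair[OF _ fst_g0] g(1) P by blast
  moreover have "generates H (snd ` insert g P)"
    using H.generates_mono[OF generates_H _ snd_gP] by blast
  then have "nearly_generates H (snd ` insert g P)"
    using H.nearly_generates_if_generates[OF _ snd_gP] by blast
  ultimately show thesis
    using that g(1) by blast
qed

lemma nearly_generating_option_if_nearly_generates_H:
  assumes P: "P \<subseteq> carrier G" and odd: "odd (card P)"
    and "\<not> generates H (snd ` P)" and "nearly_generates H (snd ` P)"
  obtains g where "g \<in> carrier G - P" and "\<not> generates G (insert g P)"
    and "nearly_generates H (snd ` insert g P)"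
proof -
  have snd_P: "snd ` P \<subseteq> carrier H"
    using P by auto
  obtain g where g: "g \<in> carrier G - P" "snd g \<in> generate H (snd ` P)"
    using exists_option_in_generated_subgroup[OF P odd] .
  have "generate H (snd ` insert g P) = generate H (snd ` P)"
    using H.generate_insert_absorb[OF g(2) snd_P] by simp
  then have "\<not> generates H (snd ` insert g P)"
    using assms(3) unfolding generates_def by simp
  then have "\<not> generates G (insert g P)"
    using generates_G_iff[of "insert g P"] g(1) P by blast
  moreover have "nearly_generates H (snd ` insert g P)"
    using H.nearly_generates_insert_absorb[OF g(2) snd_P] assms(4) by simp
  ultimately show thesis
    using that g(1) by blast
qed

lemma nearly_generating_option_if_not_nearly_generates_H:
  assumes P: "P \<subseteq> carrier G" and not_nearly: "\<not> nearly_generates H (snd ` P)"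
  obtains g where "g \<in> carrier G - P" and "\<not> generates G (insert g P)"
    and "nearly_generates H (snd ` insert g P)"
proof -
  let ?g = "(\<one>\<^bsub>klein4\<^esub>, x)"
  have snd_P: "snd ` P \<subseteq> carrier H"
    using P by auto
  have "x \<notin> snd ` P"
    using not_nearly generates_H_if_xy[of "insert y (snd ` P)"] snd_P y
    unfolding nearly_generates_def by blast
  then have "?g \<in> carrier G - P"
    using x one_klein4_closed by force
  moreover have "\<not> generates H (snd ` insert ?g P)"
    using not_nearly x unfolding nearly_generates_def by auto
  then have "\<not> generates G (insert ?g P)"
    using generates_G_iff[of "insert ?g P"] calculation P by blast
  moreover have "generates H (insert y (snd ` insert ?g P))"
    using generates_H_if_xy snd_P x y by simp
  then have "nearly_generates H (snd ` insert ?g P)"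
    using y unfolding nearly_generates_def by blast
  ultimately show thesis
    by (rule that)
qed

lemma odd_position_has_nearly_generating_option:
  assumes P: "P \<subseteq> carrier G" and unfinished: "\<not> generates G P"
    and g0: "g0 \<in> P" "fst g0 \<noteq> \<one>\<^bsub>klein4\<^esub>" and odd: "odd (card P)"
  obtains g where "g \<in> carrier G - P" and "\<not> generates G (insert g P)"
    and "nearly_generates H (snd ` insert g P)"
proof -
  have "snd ` P \<subseteq> carrier H"
    using P by auto
  then consider "generates H (snd ` P)"
    | "\<not> generates H (snd ` P)" "nearly_generates H (snd ` P)"
    | "\<not> nearly_generates H (snd ` P)"
    using H.nearly_generates_if_generates by blast
  then show thesis
    using nearly_generating_option_if_generates_H[OF P unfinished g0 odd]
      nearly_generating_option_if_nearly_generates_H[OF P odd]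
      nearly_generating_option_if_not_nearly_generates_H[OF P] that
    by cases blast+
qed

lemma odd_position_has_terminal_or_not_nearly_generating_option:
  assumes P: "P \<subseteq> carrier G" and unfinished: "\<not> generates G P"
    and g0: "g0 \<in> P" "fst g0 \<noteq> \<one>\<^bsub>klein4\<^esub>" and odd: "odd (card P)"
  obtains g where "g \<in> carrier G - P"
    and "generates G (insert g P) \<or> \<not> nearly_generates H (snd ` insert g P)"
proof (cases "nearly_generates H (snd ` P)")
  case True
  then show thesis
    using exists_generating_option_iff[OF P unfinished g0] that by blast
next
  case False
  obtain g where g: "g \<in> carrier G - P" "snd g \<in> generate H (snd ` P)"
    using exists_option_in_generated_subgroup[OF P odd] .
  have "snd ` P \<subseteq> carrier H"
    using P by auto
  then have "\<not> nearly_generates H (snd ` insert g P)"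
    using H.nearly_generates_insert_absorb[OF g(2)] False by simp
  then show thesis
    using that g(1) by blast
qed

(* The nim-value of positions that contain an element outside {\<one>} \<times> H, see gen_nim_off_H. *)
definition nim_off_H :: "((int \<times> int) \<times> 'a) set \<Rightarrow> nat" where
  "nim_off_H P = (if generates G P then 0 else if odd (card P) then 2
     else if nearly_generates H (snd ` P) then 1 else 0)"

lemma nim_off_H_insert:
  assumes "P \<subseteq> carrier G" and "g \<in> carrier G - P"
  shows "nim_off_H (insert g P) = (if generates G (insert g P) then 0 else if even (card P) then 2
     else if nearly_generates H (snd ` insert g P) then 1 else 0)"
proof -
  have "finite P"
    using assms(1) finite_G finite_subset by blast
  then show ?thesis
    using assms(2) by (simp add: nim_off_H_def)
qed

lemma gen_nim_off_H_odd_step: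
  assumes P: "P \<subseteq> carrier G" and g0: "g0 \<in> P" "fst g0 \<noteq> \<one>\<^bsub>klein4\<^esub>"
    and unfinished: "\<not> generates G P" and odd: "odd (card P)"
    and options: "\<And>g. g \<in> carrier G - P \<Longrightarrow> gen_nim G (insert g P) = nim_off_H (insert g P)"
  shows "gen_nim G P = 2"
proof (rule gen_nim_eqI[OF group_G finite_G P unfinished])
  fix m :: nat
  assume "m < 2"
  then consider "m = 0" | "m = 1"
    by linarith
  then show "\<exists>g \<in> carrier G - P. gen_nim G (insert g P) = m"
  proof cases
    case 1
    obtain g where "g \<in> carrier G - P"
      and "generates G (insert g P) \<or> \<not> nearly_generates H (snd ` insert g P)"
      using odd_position_has_terminal_or_not_nearly_generating_option[OF P unfinished g0 odd] .
    then show ?thesis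
      using options nim_off_H_insert[OF P] odd 1 by auto
  next
    case 2
    obtain g where "g \<in> carrier G - P" and "\<not> generates G (insert g P)"
      and "nearly_generates H (snd ` insert g P)"
      using odd_position_has_nearly_generating_option[OF P unfinished g0 odd] .
    then show ?thesis
      using options nim_off_H_insert[OF P] odd 2 by auto
  qed
next
  fix g
  assume "g \<in> carrier G - P"
  then show "gen_nim G (insert g P) \<noteq> 2"
    using options nim_off_H_insert[OF P] odd by simp
qed

lemma gen_nim_off_H_even_step:
  assumes P: "P \<subseteq> carrier G" and g0: "g0 \<in> P" "fst g0 \<noteq> \<one>\<^bsub>klein4\<^esub>"
    and unfinished: "\<not> generates G P" and even: "even (card P)"
    and options: "\<And>g. g \<in> carrier G - P \<Longrightarrow> gen_nim G (insert g P) = nim_off_H (insert g P)"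
  shows "gen_nim G P = (if nearly_generates H (snd ` P) then 1 else 0)"
proof -
  have option_values: "gen_nim G (insert g P) = (if generates G (insert g P) then 0 else 2)"
    if "g \<in> carrier G - P" for g
    using options[OF that] nim_off_H_insert[OF P that] even by simp
  show ?thesis
  proof (rule gen_nim_eqI[OF group_G finite_G P unfinished])
    fix m :: nat
    assume "m < (if nearly_generates H (snd ` P) then 1 else 0)"
    then have "m = 0" and "nearly_generates H (snd ` P)"
      by (auto split: if_splits)
    then show "\<exists>g \<in> carrier G - P. gen_nim G (insert g P) = m"
      using exists_generating_option_iff[OF P unfinished g0] option_values by auto
  next
    fix g
    assume g: "g \<in> carrier G - P"
    show "gen_nim G (insert g P) \<noteq> (if nearly_generates H (snd ` P) then 1 else 0)"
      using option_values[OF g] exists_generating_option_iff[OF P unfinished g0] g by auto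
  qed
qed

lemma gen_nim_off_H:
  assumes "P \<subseteq> carrier G" and "g0 \<in> P" and "fst g0 \<noteq> \<one>\<^bsub>klein4\<^esub>"
  shows "gen_nim G P = nim_off_H P"
  using assms
proof (induction "card (carrier G - P)" arbitrary: P rule: less_induct)
  case less
  note P = less.prems(1) and g0 = less.prems(2,3)
  have options: "gen_nim G (insert g P) = nim_off_H (insert g P)" if "g \<in> carrier G - P" for g
    using less.hyps[OF card_Diff_insert_less[OF finite_G that]] that P g0 by blast
  show ?case
    using gen_nim_terminal[OF group_G finite_G P] gen_nim_off_H_odd_step[OF P g0 _ _ options]
      gen_nim_off_H_even_step[OF P g0 _ _ options]
    by (simp add: nim_off_H_def)
qed

lemma exists_option_on_H:
  assumes P: "P \<subseteq> carrier G" and on_H: "fst ` P \<subseteq> {\<one>\<^bsub>klein4\<^esub>}" and even: "even (card P)"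
  obtains g where "g \<in> carrier G - P" and "fst g = \<one>\<^bsub>klein4\<^esub>"
proof -
  let ?S = "{\<one>\<^bsub>klein4\<^esub>} \<times> carrier H"
  have "P \<subseteq> ?S"
    using P on_H by fastforce
  moreover have "card ?S = order H"
    by (simp add: order_def card_cartesian_product)
  then have "P \<noteq> ?S"
    using even odd_order_H by auto
  ultimately obtain g where g: "g \<in> ?S" "g \<notin> P"
    by blast
  then have "g \<in> carrier G - P"
    using one_klein4_closed by auto
  moreover have "fst g = \<one>\<^bsub>klein4\<^esub>"
    using g(1) by auto
  ultimately show thesis
    by (rule that)
qed

lemma gen_nim_insert_on_H:
  assumes P: "P \<subseteq> carrier G" and on_H: "fst ` P \<subseteq> {\<one>\<^bsub>klein4\<^esub>}"
    and nearly: "nearly_generates H (snd ` P)" and g: "g \<in> carrier G - P"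
    and on_H_option: "fst g = \<one>\<^bsub>klein4\<^esub> \<Longrightarrow>
      gen_nim G (insert g P) = (if odd (card (insert g P)) then 0 else 1)"
  shows "gen_nim G (insert g P) = (if odd (card P) then 1 else if fst g = \<one>\<^bsub>klein4\<^esub> then 0 else 2)"
proof -
  have card: "card (insert g P) = Suc (card P)"
    using g P finite_G finite_subset by (metis DiffD2 card_insert_disjoint)
  show ?thesis
  proof (cases "fst g = \<one>\<^bsub>klein4\<^esub>")
    case True
    then show ?thesis
      using on_H_option card by simp
  next
    case False
    have gP: "insert g P \<subseteq> carrier G"
      using g P by blast
    have "fst g \<in> carrier klein4"
      using g by auto
    then have "\<not> generates G (insert g P)"
      using not_generates_G_if_fst_in_pair[OF gP, of "fst g"] on_H by blast
    moreover have "nearly_generates H (snd ` insert g P)"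
      using nearly_generates_snd_insert[OF P _ nearly] g by blast
    ultimately show ?thesis
      using gen_nim_off_H[OF gP insertI1 False] False card by (simp add: nim_off_H_def)
  qed
qed

lemma gen_nim_on_H:
  assumes "P \<subseteq> carrier G" and "fst ` P \<subseteq> {\<one>\<^bsub>klein4\<^esub>}" and "nearly_generates H (snd ` P)"
  shows "gen_nim G P = (if odd (card P) then 0 else 1)"
  using assms
proof (induction "card (carrier G - P)" arbitrary: P rule: less_induct)
  case less
  note P = less.prems(1) and on_H = less.prems(2) and nearly = less.prems(3)
  have unfinished: "\<not> generates G P"
    using not_generates_G_if_fst_in_pair[OF P one_klein4_closed] on_H by blast
  have options: "gen_nim G (insert g P) =
      (if odd (card P) then 1 else if fst g = \<one>\<^bsub>klein4\<^esub> then 0 else 2)"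
    if g: "g \<in> carrier G - P" for g
  proof (rule gen_nim_insert_on_H[OF P on_H nearly g])
    assume "fst g = \<one>\<^bsub>klein4\<^esub>"
    then have on_H_gP: "fst ` insert g P \<subseteq> {\<one>\<^bsub>klein4\<^esub>}"
      using on_H by simp
    have gP: "insert g P \<subseteq> carrier G"
      using g P by blast
    have "nearly_generates H (snd ` insert g P)"
      using nearly_generates_snd_insert[OF P _ nearly] g by blast
    then show "gen_nim G (insert g P) = (if odd (card (insert g P)) then 0 else 1)"
      by (rule less.hyps[OF card_Diff_insert_less[OF finite_G g] gP on_H_gP])
  qed
  show ?case
  proof (cases "odd (card P)")
    case True
    then show ?thesis
      using gen_nim_eqI[OF group_G finite_G P unfinished, of 0] options by simp
  next
    case False
    obtain g where g: "g \<in> carrier G - P" "fst g = \<one>\<^bsub>klein4\<^esub>"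
      using exists_option_on_H[OF P on_H] False by blast
    have "gen_nim G P = 1"
    proof (rule gen_nim_eqI[OF group_G finite_G P unfinished])
      show "\<exists>g \<in> carrier G - P. gen_nim G (insert g P) = m" if "m < 1" for m
        using that g options[OF g(1)] False by auto
      show "gen_nim G (insert g P) \<noteq> 1" if "g \<in> carrier G - P" for g
        using options[OF that] False by simp
    qed
    then show ?thesis
      using False by simp
  qed
qed

lemma gen_nim_singleton_on_H_neq_1:
  assumes g: "g \<in> carrier G" and on_H: "fst g = \<one>\<^bsub>klein4\<^esub>"
  shows "gen_nim G {g} \<noteq> 1"
proof -
  obtain w where w: "w \<in> carrier klein4" "w \<noteq> \<one>\<^bsub>klein4\<^esub>"
    using klein4_exists_outside_pair by blast
  let ?g' = "(w, x)"
  have g': "?g' \<in> carrier G - {g}"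
    using w x on_H by auto
  have gg': "{?g', g} \<subseteq> carrier G"
    using g g' by blast
  have "\<not> generates G {?g', g}"
    using not_generates_G_if_fst_in_pair[OF gg' w(1)] on_H by auto
  moreover have "nearly_generates H (snd ` {?g', g})"
    using generates_H_if_xy[of "{y, x, snd g}"] g x y unfolding nearly_generates_def by auto
  ultimately have "gen_nim G (insert ?g' {g}) = 1"
    using gen_nim_off_H[of "{?g', g}" ?g'] gg' g' w(2) by (simp add: nim_off_H_def)
  moreover have "\<not> generates G {g}"
    using not_generates_G_if_fst_in_pair[of "{g}" "\<one>\<^bsub>klein4\<^esub>"] g one_klein4_closed on_H by auto
  ultimately show ?thesis
    using gen_nim_neqI[OF group_G finite_G _ _ g'] g by blast
qed

lemma gen_nim_empty: "gen_nim G {} = 1"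
proof (rule gen_nim_eqI[OF group_G finite_G])
  show "\<not> generates G {}"
    using not_generates_G_if_fst_in_pair[OF _ one_klein4_closed] by simp
next
  have "nearly_generates H {x}"
    using generates_H_if_xy[of "{y, x}"] x y unfolding nearly_generates_def by auto
  then have "gen_nim G {(\<one>\<^bsub>klein4\<^esub>, x)} = 0"
    using gen_nim_on_H[of "{(\<one>\<^bsub>klein4\<^esub>, x)}"] one_klein4_closed x by simp
  then show "\<exists>g \<in> carrier G - {}. gen_nim G (insert g {}) = m" if "m < 1" for m
    using that one_klein4_closed x by force
next
  show "gen_nim G (insert g {}) \<noteq> 1" if g: "g \<in> carrier G - {}" for g
  proof (cases "fst g = \<one>\<^bsub>klein4\<^esub>")
    case True
    then show ?thesis
      using gen_nim_singleton_on_H_neq_1 g by simp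
  next
    case False
    then show ?thesis
      using gen_nim_off_H[of "{g}" g] g by (simp add: nim_off_H_def)
  qed
qed simp

end

theorem proposition4p11:
  fixes H :: "('a, 'b) monoid_scheme"
  assumes "group H" and "finite (carrier H)" and "odd (order H)" and "min_gens H = 2"
  shows "GEN_value (DirProd (DirProd (integer_mod_group 2) (integer_mod_group 2)) H) = 1"
proof -
  obtain S where S: "S \<subseteq> carrier H" "card S = 2" "generates H S"
    using group.exists_generating_set_of_card_min_gens[OF assms(1,2)] assms(4) by metis
  then obtain x y where "S = {x, y}"
    by (meson card_2_iff)
  then have "klein4_times_odd H x y"
    using assms(1-3) S unfolding klein4_times_odd_def klein4_times_odd_axioms_def by auto
  then interpret klein4_times_odd H x y .
  show ?thesis
    unfolding GEN_value_def by (rule gen_nim_empty)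
qed

end
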